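(* Let $k_+,k_-$ be integers with $0\leq k_-\leq k_+\leq 3$ and $k_++k_-\geq 1$, and set $\alpha \triangleq \max\{2k_+^2,3\}$. Let $D \geq 2$ and $K\geq 1$ be integers, and let $p\equiv\pm 5\pmod{12}$ be a prime such that $(\alpha K+1)^D \leq p$. For each integer $0\leq m < DK^2$ define \[C_m\triangleq \Big\{ x= \sum_{i=0}^{D-1} x_i (\alpha K+1)^i : x_i\in\mathbb{Z},\ 0\leq x_i\leq K,\ \sum_{i=0}^{D-1}x_i^2=m \Big\}. \] Let $G \triangleq \mathbb{Z}_{3k_++2k_-+1} \times \mathbb{Z}_p\times \mathbb{Z}_p$ and \[ S_m\triangleq \{ s_x : x \in C_m \}, \quad \text{where } s_x \triangleq (1,x \bmod p,x^2 \bmod p) \in G.\] Then $G\geq M\diamond_2 S_m$ for every $0\leq m < DK^2$, where $M\triangleq [-k_-,k_+]^*$.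
   Context: $[a,b]=\{a,a+1,\dots,b\}$ and $[a,b]^*=[a,b]\setminus\{0\}$. For a finite Abelian group $G$, a finite set $M\subseteq\mathbb{Z}\setminus\{0\}$ and $S=\{s_1,\dots,s_n\}\subseteq G$, we write $G\ge M\diamond_t S$ if the elements $\mathbf{e}\cdot(s_1,\dots,s_n)=\sum_i e_is_i$, over all $\mathbf{e}\in(M\cup\{0\})^n$ with $1\le\mathrm{wt}(\mathbf{e})\le t$, are all distinct and non-zero in $G$ (here $e_is_i$ is the $e_i$-fold group multiple and $\mathrm{wt}$ the Hamming weight). *)

theory Defs
  imports "HOL-Algebra.Algebra"
begin

definition adm_coeffs :: "int set \<Rightarrow> nat \<Rightarrow> 'a set \<Rightarrow> ('a \<Rightarrow> int) set" where
  "adm_coeffs M t S = {e \<in> S \<rightarrow>\<^sub>E (M \<union> {0}).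
      1 \<le> card {s \<in> S. e s \<noteq> 0} \<and> card {s \<in> S. e s \<noteq> 0} \<le> t}"

text \<open>The linear combination e . (s_1,...,s_n) = sum of e_i-fold multiples, written
  multiplicatively in the HOL-Algebra group G.\<close>
definition lin_comb :: "('a, 'b) monoid_scheme \<Rightarrow> ('a \<Rightarrow> int) \<Rightarrow> 'a set \<Rightarrow> 'a" where
  "lin_comb G e S = finprod G (\<lambda>s. s [^]\<^bsub>G\<^esub> (e s)) S"

definition diamond_ge :: "('a, 'b) monoid_scheme \<Rightarrow> int set \<Rightarrow> nat \<Rightarrow> 'a set \<Rightarrow> bool" where
  "diamond_ge G M t S \<longleftrightarrow> finite S \<and> S \<subseteq> carrier G \<and>
     (\<forall>e \<in> adm_coeffs M t S. lin_comb G e S \<noteq> \<one>\<^bsub>G\<^esub>) \<and>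
     (\<forall>e \<in> adm_coeffs M t S. \<forall>e' \<in> adm_coeffs M t S.
        e \<noteq> e' \<longrightarrow> lin_comb G e S \<noteq> lin_comb G e' S)"

end

(*
  Write B = max (2 kp^2) 3 * K + 1 and identify x in C_m with its digit vector U in [0, K]^D, a lattice
  point on the sphere |U|^2 = m.  If two admissible coefficient vectors e, e' have the same image, the
  first coordinate (modulo 3 kp + 2 km + 1, more than the spread of the coefficient sums) forces equal
  coefficient sums, so f = e - e' satisfies sum f = 0 and sum f x = sum f x^2 = 0 (mod p) on a support
  of at most four points.  Three or fewer distinct points admit no such relation.  Four points give
  a u + b v = c w + d z and a u^2 + b v^2 = c w^2 + d z^2 (mod p) with a + b = c + d.  The coefficients
  are small and B^D <= p, so every such linear relation between the numbers holds digitwise.  On the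
  sphere this yields a b |U - V|^2 = c d |W - Z|^2, hence a b c d > 0.  For coefficients this small the
  only positive non-square value of a b c d is 12, excluded because 3 is a non-residue modulo
  p = +-5 (mod 12); so a b c d = t^2, and the quadratic relation gives a second digitwise relation
  a b (U - V) = +-t (W - Z) (or U + V = W + Z when a + b = 0).  Together the two relations put W on the
  line through U and V, which meets the sphere only in U and V.
*)
theory Submission
  imports Defs "HOL-Number_Theory.Number_Theory"
begin

definition digit_value :: "int \<Rightarrow> nat \<Rightarrow> (nat \<Rightarrow> int) \<Rightarrow> int" where
  "digit_value B D U = (\<Sum>i<D. U i * B ^ i)"

lemma digit_value_cong: "(\<And>i. i < D \<Longrightarrow> U i = V i) \<Longrightarrow> digit_value B D U = digit_value B D V"
  by (simp add: digit_value_def)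

lemma digit_value_linear4:
  "digit_value B D (\<lambda>i. a * U i + b * V i + c * W i + d * Z i) =
     a * digit_value B D U + b * digit_value B D V + c * digit_value B D W + d * digit_value B D Z"
  by (simp add: digit_value_def sum.distrib sum_distrib_left algebra_simps)

lemma digit_value_Suc: "digit_value B (Suc D) U = digit_value B D U + U D * B ^ D"
  by (simp add: digit_value_def)

lemma abs_digit_value_le:
  assumes "1 \<le> B" and "\<And>i. i < D \<Longrightarrow> \<bar>U i\<bar> \<le> B - 1"
  shows "\<bar>digit_value B D U\<bar> \<le> B ^ D - 1"
  using assms(2)
proof (induction D)
  case 0
  then show ?case by (simp add: digit_value_def)
next
  case (Suc D)
  have "\<bar>U D * B ^ D\<bar> \<le> (B - 1) * B ^ D"
    using Suc.prems assms(1) by (simp add: abs_mult mult_right_mono)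
  moreover have "\<bar>digit_value B D U\<bar> \<le> B ^ D - 1"
    using Suc by simp
  moreover have "B ^ Suc D - 1 = (B ^ D - 1) + (B - 1) * B ^ D"
    by (simp add: algebra_simps)
  ultimately show ?case
    unfolding digit_value_Suc by (smt (verit) abs_triangle_ineq)
qed

lemma digit_value_range:
  assumes "1 \<le> B" and "\<And>i. i < D \<Longrightarrow> 0 \<le> U i \<and> U i \<le> B - 1"
  shows "0 \<le> digit_value B D U \<and> digit_value B D U < B ^ D"
proof
  show "0 \<le> digit_value B D U"
    unfolding digit_value_def using assms by (intro sum_nonneg) auto
  moreover have "\<bar>digit_value B D U\<bar> \<le> B ^ D - 1"
    using assms by (intro abs_digit_value_le) auto
  ultimately show "digit_value B D U < B ^ D"
    by simp
qed

lemma digits_eq_0_if_digit_value_eq_0: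
  assumes "2 \<le> B" and "\<And>i. i < D \<Longrightarrow> \<bar>U i\<bar> \<le> B - 1" and "digit_value B D U = 0"
  shows "\<forall>i<D. U i = 0"
  using assms(2,3)
proof (induction D)
  case 0
  then show ?case by simp
next
  case (Suc D)
  have low: "\<bar>digit_value B D U\<bar> \<le> B ^ D - 1"
    using Suc.prems(1) assms(1) by (intro abs_digit_value_le) auto
  have top: "digit_value B D U = - (U D * B ^ D)"
    using Suc.prems(2) by (simp add: digit_value_Suc)
  have "U D = 0"
  proof (rule ccontr)
    assume "U D \<noteq> 0"
    then have "1 * B ^ D \<le> \<bar>U D\<bar> * B ^ D"
      using assms(1) by (intro mult_right_mono) auto
    then show False
      using low top assms(1) by (simp add: abs_mult)
  qed
  then have "digit_value B D U = 0"
    using top by simp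
  then have "\<forall>i<D. U i = 0"
    by (rule Suc.IH[rotated]) (use Suc.prems(1) in auto)
  with \<open>U D = 0\<close> show ?case
    using less_Suc_eq by blast
qed

lemma dvd_abs_less_imp_eq_0: "(p::int) dvd t \<Longrightarrow> \<bar>t\<bar> < p \<Longrightarrow> t = 0"
  using dvd_imp_le_int by force

lemma digits_eq_0_if_dvd_digit_value:
  assumes "2 \<le> B" and "B ^ D \<le> p" and "\<And>i. i < D \<Longrightarrow> \<bar>U i\<bar> \<le> B - 1"
    and "p dvd digit_value B D U"
  shows "\<forall>i<D. U i = 0"
proof (rule digits_eq_0_if_digit_value_eq_0[OF assms(1,3)])
  have "\<bar>digit_value B D U\<bar> \<le> B ^ D - 1"
    using assms(1,3) by (intro abs_digit_value_le) auto
  then show "digit_value B D U = 0"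
    using assms(2,4) dvd_abs_less_imp_eq_0 by force
qed

text \<open>Shifting every entry by \<open>K/2\<close> does not change a combination with coefficient sum 0.\<close>
lemma abs_balanced_combination_le:
  fixes a b c d u v w z K :: int
  assumes "a + b + c + d = 0"
    and "0 \<le> u" "u \<le> K" "0 \<le> v" "v \<le> K" "0 \<le> w" "w \<le> K" "0 \<le> z" "z \<le> K"
  shows "2 * \<bar>a * u + b * v + c * w + d * z\<bar> \<le> (\<bar>a\<bar> + \<bar>b\<bar> + \<bar>c\<bar> + \<bar>d\<bar>) * K"
proof -
  have shift: "2 * (a * u + b * v + c * w + d * z) =
      a * (2 * u - K) + b * (2 * v - K) + c * (2 * w - K) + d * (2 * z - K)"
  proof -
    have "2 * (a * u + b * v + c * w + d * z) =
        a * (2 * u - K) + b * (2 * v - K) + c * (2 * w - K) + d * (2 * z - K) + (a + b + c + d) * K"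
      by (simp add: algebra_simps)
    then show ?thesis
      using assms(1) by simp
  qed
  have "\<bar>e * (2 * y - K)\<bar> \<le> \<bar>e\<bar> * K" if "0 \<le> y" "y \<le> K" for e y :: int
    using that by (simp add: abs_mult mult_left_mono)
  then have "\<bar>a * (2 * u - K)\<bar> + \<bar>b * (2 * v - K)\<bar> + \<bar>c * (2 * w - K)\<bar> + \<bar>d * (2 * z - K)\<bar>
      \<le> (\<bar>a\<bar> + \<bar>b\<bar> + \<bar>c\<bar> + \<bar>d\<bar>) * K"
    using assms(2-9) by (simp add: distrib_right add_mono)
  moreover have "2 * \<bar>a * u + b * v + c * w + d * z\<bar> \<le>
      \<bar>a * (2 * u - K)\<bar> + \<bar>b * (2 * v - K)\<bar> + \<bar>c * (2 * w - K)\<bar> + \<bar>d * (2 * z - K)\<bar>"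
    using shift by (smt (verit))
  ultimately show ?thesis
    by (rule order_trans[rotated])
qed

lemma digitwise_eq_0_if_dvd_combination:
  fixes a b c d B K p :: int
  assumes "2 \<le> B" and "B ^ D \<le> p"
    and "a + b + c + d = 0" and "(\<bar>a\<bar> + \<bar>b\<bar> + \<bar>c\<bar> + \<bar>d\<bar>) * K \<le> 2 * (B - 1)"
    and "\<forall>i<D. 0 \<le> U i \<and> U i \<le> K" "\<forall>i<D. 0 \<le> V i \<and> V i \<le> K"
    and "\<forall>i<D. 0 \<le> W i \<and> W i \<le> K" "\<forall>i<D. 0 \<le> Z i \<and> Z i \<le> K"
    and "p dvd a * digit_value B D U + b * digit_value B D V + c * digit_value B D W + d * digit_value B D Z"
  shows "\<forall>i<D. a * U i + b * V i + c * W i + d * Z i = 0"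
proof (rule digits_eq_0_if_dvd_digit_value[OF assms(1,2)])
  fix i assume "i < D"
  then have "2 * \<bar>a * U i + b * V i + c * W i + d * Z i\<bar> \<le> (\<bar>a\<bar> + \<bar>b\<bar> + \<bar>c\<bar> + \<bar>d\<bar>) * K"
    using assms(3,5-8) by (intro abs_balanced_combination_le) auto
  then show "\<bar>a * U i + b * V i + c * W i + d * Z i\<bar> \<le> B - 1"
    using assms(4) by (smt (verit))
next
  show "p dvd digit_value B D (\<lambda>i. a * U i + b * V i + c * W i + d * Z i)"
    using assms(9) by (simp add: digit_value_linear4)
qed

lemma digit_value_eq_if_combination:
  "\<forall>i<D. a * U i + b * V i = c * W i + d * Z i \<Longrightarrow>
    a * digit_value B D U + b * digit_value B D V = c * digit_value B D W + d * digit_value B D Z"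
proof -
  assume "\<forall>i<D. a * U i + b * V i = c * W i + d * Z i"
  then have "digit_value B D (\<lambda>i. a * U i + b * V i + (- c) * W i + (- d) * Z i) = digit_value B D (\<lambda>i. 0)"
    by (intro digit_value_cong) simp
  then show ?thesis
    unfolding digit_value_linear4 by (simp add: digit_value_def)
qed

lemma digits_neq_if_digit_value_neq:
  "digit_value B D U \<noteq> digit_value B D V \<Longrightarrow> \<exists>i<D. U i \<noteq> V i"
  using digit_value_cong[of D U V B] by blast

definition norm2 :: "nat \<Rightarrow> (nat \<Rightarrow> int) \<Rightarrow> int" where
  "norm2 D U = (\<Sum>i<D. (U i)\<^sup>2)"

lemma norm2_cong: "(\<And>i. i < D \<Longrightarrow> U i = V i) \<Longrightarrow> norm2 D U = norm2 D V"
  by (simp add: norm2_def)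

lemma norm2_scale: "norm2 D (\<lambda>i. c * U i) = c\<^sup>2 * norm2 D U"
  by (simp add: norm2_def sum_distrib_left power_mult_distrib)

lemma norm2_pos_iff: "0 < norm2 D U \<longleftrightarrow> (\<exists>i<D. U i \<noteq> 0)"
proof -
  have "0 \<le> norm2 D U"
    by (simp add: norm2_def sum_nonneg)
  moreover have "norm2 D U = 0 \<longleftrightarrow> (\<forall>i<D. U i = 0)"
    by (auto simp: norm2_def sum_nonneg_eq_0_iff)
  ultimately show ?thesis
    by force
qed

lemma norm2_combination:
  "(a + b) * (a * norm2 D U + b * norm2 D V) - norm2 D (\<lambda>i. a * U i + b * V i) =
     a * b * norm2 D (\<lambda>i. U i - V i)"
proof -
  have "(a + b) * (a * norm2 D U + b * norm2 D V) - norm2 D (\<lambda>i. a * U i + b * V i) =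
      (\<Sum>i<D. (a + b) * (a * (U i)\<^sup>2 + b * (V i)\<^sup>2) - (a * U i + b * V i)\<^sup>2)"
    by (simp add: norm2_def distrib_left sum_distrib_left sum.distrib sum_subtractf)
  also have "\<dots> = (\<Sum>i<D. a * b * (U i - V i)\<^sup>2)"
    by (intro sum.cong) (simp_all add: power2_eq_square algebra_simps)
  also have "\<dots> = a * b * norm2 D (\<lambda>i. U i - V i)"
    by (simp add: norm2_def sum_distrib_left)
  finally show ?thesis .
qed

definition on_line :: "nat \<Rightarrow> (nat \<Rightarrow> int) \<Rightarrow> (nat \<Rightarrow> int) \<Rightarrow> (nat \<Rightarrow> int) \<Rightarrow> bool" where
  "on_line D U V W \<longleftrightarrow> (\<exists>s t. s + t \<noteq> 0 \<and> (\<forall>i<D. (s + t) * W i = s * U i + t * V i))"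

lemma on_line_sphere:
  assumes "on_line D U V W" and "norm2 D U = norm2 D V" and "norm2 D W = norm2 D U"
  shows "(\<forall>i<D. W i = U i) \<or> (\<forall>i<D. W i = V i)"
proof -
  obtain s t where st: "s + t \<noteq> 0" and W: "\<forall>i<D. (s + t) * W i = s * U i + t * V i"
    using assms(1) unfolding on_line_def by blast
  have "norm2 D (\<lambda>i. s * U i + t * V i) = (s + t)\<^sup>2 * norm2 D U"
    using W assms(3) norm2_scale[of D "s + t" W] norm2_cong[of D "\<lambda>i. (s + t) * W i"] by auto
  then have "s * t * norm2 D (\<lambda>i. U i - V i) = 0"
    using norm2_combination[of s t D U V] assms(2) by (simp add: power2_eq_square algebra_simps)
  then consider "s = 0" | "t = 0" | "\<forall>i<D. U i = V i"
    using norm2_pos_iff[of D "\<lambda>i. U i - V i"] by force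
  then show ?thesis
  proof cases
    case 1
    then show ?thesis
      using st W by auto
  next
    case 2
    then show ?thesis
      using st W by auto
  next
    case 3
    then have "\<forall>i<D. (s + t) * W i = (s + t) * U i"
      using W by (simp add: distrib_right)
    then show ?thesis
      using st by simp
  qed
qed

lemma combination_coefficients_sign:
  fixes a b c d :: int
  assumes "norm2 D U = n" "norm2 D V = n" "norm2 D W = n" "norm2 D Z = n"
    and "a + b = c + d" and "\<forall>i<D. a * U i + b * V i = c * W i + d * Z i"
    and "\<exists>i<D. U i \<noteq> V i" "\<exists>i<D. W i \<noteq> Z i" "a * b \<noteq> 0" "c * d \<noteq> 0"
  shows "0 < a * b * (c * d)"
proof -
  define N1 where "N1 = norm2 D (\<lambda>i. U i - V i)"
  define N2 where "N2 = norm2 D (\<lambda>i. W i - Z i)"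
  have "a * b * N1 = (a + b) * ((a + b) * n) - norm2 D (\<lambda>i. a * U i + b * V i)"
    using norm2_combination[of a b D U V] assms(1,2) unfolding N1_def by (simp add: algebra_simps)
  also have "norm2 D (\<lambda>i. a * U i + b * V i) = norm2 D (\<lambda>i. c * W i + d * Z i)"
    using assms(6) by (intro norm2_cong) auto
  also have "(a + b) * ((a + b) * n) - norm2 D (\<lambda>i. c * W i + d * Z i) = c * d * N2"
    using norm2_combination[of c d D W Z] assms(3-5) unfolding N2_def by (simp add: algebra_simps)
  finally have eq: "a * b * N1 = c * d * N2" .
  have "0 < N1" "0 < N2"
    using assms(7,8) norm2_pos_iff unfolding N1_def N2_def by auto
  have "a * b * (c * d) * N1 = (c * d)\<^sup>2 * N2"
    using eq by (simp add: power2_eq_square algebra_simps)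
  also have "\<dots> > 0"
    using \<open>0 < N2\<close> assms(10) by simp
  finally show ?thesis
    using \<open>0 < N1\<close> zero_less_mult_pos2 by blast
qed

lemma on_line_if_two_relations:
  assumes rel: "\<forall>i<D. a * U i + b * V i = c * W i + d * Z i"
    and rel': "\<forall>i<D. a' * U i + b' * V i = c' * W i + d' * Z i"
    and "a + b = c + d" and "a' + b' = c' + d'" and "d' * c - d * c' \<noteq> 0"
  shows "on_line D U V W"
proof -
  define s t where "s = d' * a - d * a'" and "t = d' * b - d * b'"
  have "s + t = d' * (a + b) - d * (a' + b')"
    unfolding s_def t_def by (simp add: algebra_simps)
  also have "\<dots> = d' * c - d * c'"
    using assms(3,4) by (simp add: algebra_simps)
  finally have st: "s + t = d' * c - d * c'" .
  \<comment> \<open>\<open>d'\<close> times the first relation minus \<open>d\<close> times the second eliminates \<open>Z\<close>.\<close>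
  have "\<forall>i<D. (s + t) * W i = s * U i + t * V i"
  proof (intro allI impI)
    fix i assume "i < D"
    then have "a * U i + b * V i - (c * W i + d * Z i) = 0" "a' * U i + b' * V i - (c' * W i + d' * Z i) = 0"
      using rel rel' by auto
    moreover have "(d' * c - d * c') * W i - (s * U i + t * V i) =
        d * (a' * U i + b' * V i - (c' * W i + d' * Z i)) - d' * (a * U i + b * V i - (c * W i + d * Z i))"
      unfolding s_def t_def by (simp add: algebra_simps)
    ultimately show "(s + t) * W i = s * U i + t * V i"
      unfolding st by simp
  qed
  then show ?thesis
    unfolding on_line_def using st assms(5) by (intro exI[of _ s] exI[of _ t]) simp
qed

lemma digit_value_on_line_sphere:
  assumes "on_line D U V W" and "norm2 D U = norm2 D V" and "norm2 D W = norm2 D U"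
  shows "digit_value B D W = digit_value B D U \<or> digit_value B D W = digit_value B D V"
  using on_line_sphere[OF assms]
proof
  assume "\<forall>i<D. W i = U i"
  then have "digit_value B D W = digit_value B D U"
    by (intro digit_value_cong) simp
  then show ?thesis ..
next
  assume "\<forall>i<D. W i = V i"
  then have "digit_value B D W = digit_value B D V"
    by (intro digit_value_cong) simp
  then show ?thesis ..
qed

lemma four_term_quadratic_identity:
  fixes a b c d u v w z :: int
  assumes "a + b = c + d" and "a * u + b * v = c * w + d * z"
  shows "a * b * (u - v)\<^sup>2 - c * d * (w - z)\<^sup>2 = (a + b) * ((a * u\<^sup>2 + b * v\<^sup>2) - (c * w\<^sup>2 + d * z\<^sup>2))"
proof -
  have d: "d = a + b - c"
    using assms(1) by simp
  have "a * b * (u - v)\<^sup>2 - c * d * (w - z)\<^sup>2 =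
      (a + b) * ((a * u\<^sup>2 + b * v\<^sup>2) - (c * w\<^sup>2 + d * z\<^sup>2)) - ((a * u + b * v)\<^sup>2 - (c * w + d * z)\<^sup>2)"
    unfolding d by (simp add: algebra_simps power2_eq_square)
  then show ?thesis
    using assms(2) by simp
qed

lemma QuadRes_3_iff: "QuadRes 3 a \<longleftrightarrow> a mod 3 \<noteq> 2"
proof
  assume "QuadRes 3 a"
  then obtain y where "[y\<^sup>2 = a] (mod 3)"
    by (auto simp: QuadRes_def)
  then have "(y mod 3)\<^sup>2 mod 3 = a mod 3"
    by (simp add: cong_def power_mod)
  moreover have "y mod 3 \<in> {0, 1, 2}"
    by auto
  ultimately show "a mod 3 \<noteq> 2"
    by (auto simp: power2_eq_square)
next
  assume "a mod 3 \<noteq> 2"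
  then have "a mod 3 = 0 \<or> a mod 3 = 1"
    by auto
  then have "[(a mod 3)\<^sup>2 = a] (mod 3)"
    by (auto simp: cong_def)
  then show "QuadRes 3 a"
    unfolding QuadRes_def by blast
qed

lemma three_not_QuadRes:
  fixes p :: nat
  assumes "Factorial_Ring.prime p" and "p mod 12 = 5 \<or> p mod 12 = 7"
  shows "\<not> QuadRes (int p) 3"
proof -
  have "p > 3"
    using assms(2) by auto
  then have reciprocity: "Legendre (int p) 3 * Legendre 3 (int p) = (-1) ^ ((p - 1) div 2)"
    using Quadratic_Reciprocity[of p 3] assms(1) by simp
  have "\<not> [int p = 0] (mod 3)"
    using assms(2) unfolding cong_def by presburger
  then have p_mod_3: "Legendre (int p) 3 = (if int p mod 3 = 2 then -1 else 1)"
    using QuadRes_3_iff[of "int p"] by (simp add: Legendre_def)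
  have "Legendre 3 (int p) = -1"
    using assms(2)
  proof
    assume "p mod 12 = 5"
    moreover have "int p mod 3 = 2" "even ((p - 1) div 2)"
      using \<open>p mod 12 = 5\<close> by presburger+
    ultimately show ?thesis
      using reciprocity p_mod_3 by simp
  next
    assume "p mod 12 = 7"
    moreover have "int p mod 3 = 1" "odd ((p - 1) div 2)"
      using \<open>p mod 12 = 7\<close> by presburger+
    ultimately show ?thesis
      using reciprocity p_mod_3 by simp
  qed
  moreover have "\<not> [3 = 0] (mod int p)"
    using \<open>p > 3\<close> by (auto simp: cong_def)
  ultimately show ?thesis
    by (auto simp: Legendre_def split: if_splits)
qed

lemma QuadRes_if_dvd_square_diff:
  fixes p n u v :: int
  assumes "Factorial_Ring.prime p" and "\<not> p dvd v" and "p dvd u\<^sup>2 - n * v\<^sup>2"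
  shows "QuadRes p n"
proof -
  have "coprime v p"
    using assms(1,2) by (simp add: prime_imp_coprime coprime_commute)
  then obtain t where t: "[v * t = 1] (mod p)"
    using cong_solve_coprime_int by blast
  have "[u\<^sup>2 = n * v\<^sup>2] (mod p)"
    using assms(3) by (simp add: cong_iff_dvd_diff)
  then have "[u\<^sup>2 * t\<^sup>2 = n * v\<^sup>2 * t\<^sup>2] (mod p)"
    by (rule cong_mult[OF _ cong_refl])
  then have "[(u * t)\<^sup>2 = n * (v * t)\<^sup>2] (mod p)"
    by (simp add: power_mult_distrib mult.assoc)
  also have "[n * (v * t)\<^sup>2 = n * 1\<^sup>2] (mod p)"
    using t by (intro cong_scalar_left cong_pow)
  finally show ?thesis
    unfolding QuadRes_def by auto
qed

lemma small_balanced_product_cases: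
  fixes a b c d :: int
  assumes "a \<in> {-3..3} - {0}" "b \<in> {-3..3} - {0}" "c \<in> {-3..3} - {0}" "d \<in> {-3..3} - {0}"
    and "a + b = c + d" and "a + b \<noteq> 0" and "0 < a * b * (c * d)"
  shows "a * b * (c * d) = 12 \<or> (\<exists>t. 0 < t \<and> a * b * (c * d) = t\<^sup>2)"
proof -
  have range: "{-3..3::int} - {0} = {-3, -2, -1, 1, 2, 3}"
    by auto
  have d: "d = a + b - c"
    using assms(5) by simp
  have table: "\<forall>a\<in>{-3, -2, -1, 1, 2, 3}. \<forall>b\<in>{-3, -2, -1, 1, 2, 3}. \<forall>c\<in>{-3, -2, -1, 1, 2, 3}.
      a + b - c \<in> {-3, -2, -1, 1, 2, 3} \<longrightarrow> a + b \<noteq> 0 \<longrightarrow> 0 < a * b * (c * (a + b - c)) \<longrightarrow>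
      a * b * (c * (a + b - c)) \<in> {12, 1, 4, 9, 16, 36, 81::int}"
    by simp
  have mem: "a \<in> {-3, -2, -1, 1, 2, 3}" "b \<in> {-3, -2, -1, 1, 2, 3}" "c \<in> {-3, -2, -1, 1, 2, 3}"
      "a + b - c \<in> {-3, -2, -1, 1, 2, 3}"
    using assms(1-4) d unfolding range by simp_all
  have "0 < a * b * (c * (a + b - c))"
    using assms(7) d by simp
  then have "a * b * (c * (a + b - c)) \<in> {12, 1, 4, 9, 16, 36, 81}"
    by (rule table[rule_format, OF mem assms(6)])
  then have "a * b * (c * d) \<in> {12, 1, 4, 9, 16, 36, 81}"
    using d by simp
  then have "a * b * (c * d) \<in> {12, 1\<^sup>2, 2\<^sup>2, 3\<^sup>2, 4\<^sup>2, 6\<^sup>2, 9\<^sup>2}"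
    by (simp add: power2_eq_square)
  then show ?thesis
    by (elim insertE emptyE) (simp, (rule disjI2, rule exI, rule conjI[rotated], assumption, simp)+)
qed

lemma sum_bounds_if_card_support_le:
  fixes e :: "'a \<Rightarrow> int"
  assumes "finite I" and "\<forall>i\<in>I. lo \<le> e i \<and> e i \<le> hi" and "lo \<le> 0" "0 \<le> hi"
    and "card {i\<in>I. e i \<noteq> 0} \<le> n"
  shows "int n * lo \<le> sum e I \<and> sum e I \<le> int n * hi"
proof -
  define A where "A = {i\<in>I. e i \<noteq> 0}"
  have "sum e I = sum e A"
    unfolding A_def using assms(1) by (intro sum.mono_neutral_right) auto
  moreover have "int (card A) * lo \<le> sum e A" "sum e A \<le> int (card A) * hi"
    using assms(2) unfolding A_def by (auto intro: sum_bounded_below sum_bounded_above)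
  moreover have "int n * lo \<le> int (card A) * lo" "int (card A) * hi \<le> int n * hi"
    using assms(3-5) unfolding A_def by (auto intro: mult_right_mono_neg mult_right_mono)
  ultimately show ?thesis
    by linarith
qed

lemma three_term_quadratic_relation:
  fixes a b c x y z p :: int
  assumes "a + b + c = 0" and "p dvd a * x + b * y + c * z" and "p dvd a * x\<^sup>2 + b * y\<^sup>2 + c * z\<^sup>2"
  shows "p dvd a * c * (x - z)\<^sup>2"
proof -
  define L Q where "L = a * x + b * y + c * z" and "Q = a * x\<^sup>2 + b * y\<^sup>2 + c * z\<^sup>2"
  have c: "c = - a - b"
    using assms(1) by simp
  have "a * c * (x - z)\<^sup>2 = L * (L - 2 * a * (x - z)) - b * (Q - 2 * z * L)"
    unfolding L_def Q_def c by (simp add: algebra_simps power2_eq_square)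
  moreover have "p dvd L * (L - 2 * a * (x - z)) - b * (Q - 2 * z * L)"
    using assms(2,3) unfolding L_def Q_def by simp
  ultimately show ?thesis
    by simp
qed

lemma quadratic_relation_support_empty:
  fixes f \<xi> :: "'a \<Rightarrow> int"
  assumes "Factorial_Ring.prime p" and "finite T" and "card T \<le> 3"
    and "\<forall>t\<in>T. \<not> p dvd f t" and "inj_on \<xi> T" and "\<forall>t\<in>T. 0 \<le> \<xi> t \<and> \<xi> t < p"
    and "sum f T = 0" and "p dvd (\<Sum>t\<in>T. f t * \<xi> t)" and "p dvd (\<Sum>t\<in>T. f t * (\<xi> t)\<^sup>2)"
  shows "T = {}"
proof -
  have distinct: False if "t \<in> T" "t' \<in> T" "t \<noteq> t'" "p dvd f t * f t' * (\<xi> t - \<xi> t')\<^sup>2" for t t'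
  proof -
    have "p dvd \<xi> t - \<xi> t'"
      using that(1,2,4) assms(1,4) by (auto simp: prime_dvd_mult_iff prime_dvd_power_iff)
    then have "\<xi> t = \<xi> t'"
      using that(1,2) assms(6) cong_less_imp_eq_int[of "\<xi> t" p "\<xi> t'"] by (simp add: cong_iff_dvd_diff)
    then show False
      using that assms(5) by (auto dest: inj_onD)
  qed
  consider "card T = 0" | "card T = 1" | "card T = 2" | "card T = 3"
    using assms(3) by linarith
  then show ?thesis
  proof cases
    case 1
    then show ?thesis
      using assms(2) by simp
  next
    case 2
    then obtain t where "T = {t}"
      by (rule card_1_singletonE)
    then show ?thesis
      using assms(1,4,7) by simp
  next
    case 3
    then obtain t t' where T: "T = {t, t'}" "t \<noteq> t'"
      by (auto simp: card_2_iff)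
    \<comment> \<open>a two-point relation is a three-term one with middle coefficient 0\<close>
    then have "f t + 0 + f t' = 0" "p dvd f t * \<xi> t + 0 * 0 + f t' * \<xi> t'"
        "p dvd f t * (\<xi> t)\<^sup>2 + 0 * 0\<^sup>2 + f t' * (\<xi> t')\<^sup>2"
      using assms(7-9) by simp_all
    then have "p dvd f t * f t' * (\<xi> t - \<xi> t')\<^sup>2"
      by (rule three_term_quadratic_relation)
    then show ?thesis
      using distinct T by blast
  next
    case 4
    then obtain t t'' t' where T: "T = {t, t'', t'}" "t \<noteq> t''" "t'' \<noteq> t'" "t \<noteq> t'"
      by (auto simp: card_3_iff)
    then have "f t + f t'' + f t' = 0" "p dvd f t * \<xi> t + f t'' * \<xi> t'' + f t' * \<xi> t'"
        "p dvd f t * (\<xi> t)\<^sup>2 + f t'' * (\<xi> t'')\<^sup>2 + f t' * (\<xi> t')\<^sup>2"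
      using assms(7-9) by (simp_all add: add.assoc)
    then have "p dvd f t * f t' * (\<xi> t - \<xi> t')\<^sup>2"
      by (rule three_term_quadratic_relation)
    then show ?thesis
      using distinct T by blast
  qed
qed

lemma disjoint_pair_supports:
  assumes "finite I" and "card {i\<in>I. e i \<noteq> 0} \<le> 2" and "card {i\<in>I. e' i \<noteq> 0} \<le> 2"
    and "3 < card {i\<in>I. e i \<noteq> e' i}"
  obtains s1 s2 s3 s4 where "{i\<in>I. e i \<noteq> 0} = {s1, s2}" "s1 \<noteq> s2"
    and "{i\<in>I. e' i \<noteq> 0} = {s3, s4}" "s3 \<noteq> s4" "s3 \<notin> {s1, s2}"
proof -
  define A A' where "A = {i\<in>I. e i \<noteq> 0}" and "A' = {i\<in>I. e' i \<noteq> 0}"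
  have fin: "finite A" "finite A'"
    using assms(1) unfolding A_def A'_def by auto
  have "{i\<in>I. e i \<noteq> e' i} \<subseteq> A \<union> A'"
    unfolding A_def A'_def by auto
  then have "3 < card (A \<union> A')"
    using assms(4) fin by (meson card_mono finite_UnI less_le_trans)
  moreover have "card (A \<union> A') + card (A \<inter> A') = card A + card A'"
    using card_Un_Int[OF fin] by simp
  ultimately have "card A = 2" "card A' = 2" "card (A \<inter> A') = 0"
    using assms(2,3) unfolding A_def A'_def by linarith+
  then have "A \<inter> A' = {}"
    using fin by simp
  with \<open>card A = 2\<close> \<open>card A' = 2\<close> show ?thesis
    using that unfolding A_def A'_def card_2_iff by blast
qed

lemma sum_mult_mod_mod:
  fixes e g :: "'a \<Rightarrow> int"
  shows "(\<Sum>s\<in>S. e s * (g s mod n)) mod n = (\<Sum>s\<in>S. e s * g s) mod n"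
proof -
  have "(\<Sum>s\<in>S. e s * (g s mod n)) mod n = (\<Sum>s\<in>S. e s * (g s mod n) mod n) mod n"
    by (rule mod_sum_eq[symmetric])
  also have "\<dots> = (\<Sum>s\<in>S. e s * g s mod n) mod n"
    by (simp only: mod_mult_right_eq)
  also have "\<dots> = (\<Sum>s\<in>S. e s * g s) mod n"
    by (rule mod_sum_eq)
  finally show ?thesis .
qed

lemma DirProd_comm_group:
  assumes "comm_group G" and "comm_group H"
  shows "comm_group (G \<times>\<times> H)"
proof -
  interpret G: comm_group G by fact
  interpret H: comm_group H by fact
  interpret group "G \<times>\<times> H"
    by (intro DirProd_group G.group_axioms H.group_axioms)
  show ?thesis
    by (rule group_comm_groupI) (auto simp: G.m_comm H.m_comm)
qed

lemma int_pow_DirProd: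
  assumes "group G" and "group H" and "g \<in> carrier G" and "h \<in> carrier H"
  shows "(g, h) [^]\<^bsub>G \<times>\<times> H\<^esub> (n::int) = (g [^]\<^bsub>G\<^esub> n, h [^]\<^bsub>H\<^esub> n)"
proof -
  have "fst \<in> hom (G \<times>\<times> H) G" "snd \<in> hom (G \<times>\<times> H) H"
    unfolding hom_def by auto
  then show ?thesis
    using hom_int_pow[of fst "G \<times>\<times> H" G "(g, h)" n] hom_int_pow[of snd "G \<times>\<times> H" H "(g, h)" n]
      DirProd_group[OF assms(1,2)] assms
    by (metis carrier_DirProd mem_Times_iff prod.collapse fst_conv snd_conv)
qed

lemma finprod_DirProd:
  assumes "comm_group G" and "comm_group H" and "finite A" and "f \<in> A \<rightarrow> carrier (G \<times>\<times> H)"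
  shows "finprod (G \<times>\<times> H) f A = (finprod G (\<lambda>a. fst (f a)) A, finprod H (\<lambda>a. snd (f a)) A)"
  using assms(3,4)
proof (induction A rule: finite_induct)
  case empty
  interpret G: comm_group G by fact
  interpret H: comm_group H by fact
  interpret GH: comm_group "G \<times>\<times> H"
    by (rule DirProd_comm_group[OF assms(1,2)])
  show ?case
    by simp
next
  case (insert a A)
  interpret G: comm_group G by fact
  interpret H: comm_group H by fact
  interpret GH: comm_group "G \<times>\<times> H"
    by (rule DirProd_comm_group[OF assms(1,2)])
  have f: "f a \<in> carrier (G \<times>\<times> H)" "f \<in> A \<rightarrow> carrier (G \<times>\<times> H)"
    using insert.prems by auto
  then have "fst (f a) \<in> carrier G" "snd (f a) \<in> carrier H"
    "(\<lambda>i. fst (f i)) \<in> A \<rightarrow> carrier G" "(\<lambda>i. snd (f i)) \<in> A \<rightarrow> carrier H"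
    by (auto simp: Pi_iff mem_Times_iff)
  with f show ?case
    using insert by (simp add: GH.finprod_insert G.finprod_insert H.finprod_insert mult_DirProd')
qed

lemma finprod_integer_mod_group:
  assumes "finite A" and "f \<in> A \<rightarrow> carrier (integer_mod_group n)"
  shows "finprod (integer_mod_group n) f A = (\<Sum>a\<in>A. f a) mod int n"
  using assms
proof (induction A rule: finite_induct)
  case empty
  interpret comm_group "integer_mod_group n"
    by simp
  show ?case
    by simp
next
  case (insert a A)
  interpret comm_group "integer_mod_group n"
    by simp
  have "f a mod int n = f a"
    using insert.prems by (auto simp: carrier_integer_mod_group split: if_splits)
  then show ?case
    using insert by (simp add: finprod_insert Pi_iff mod_add_right_eq)
qed

lemma mod_in_carrier_integer_mod_group: "x mod int n \<in> carrier (integer_mod_group n)"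
  by (simp add: carrier_integer_mod_group)

lemma finprod_mod_integer_mod_group:
  assumes "finite A"
  shows "finprod (integer_mod_group n) (\<lambda>a. f a mod int n) A = (\<Sum>a\<in>A. f a) mod int n"
  using assms mod_in_carrier_integer_mod_group
  by (simp add: finprod_integer_mod_group Pi_iff mod_sum_eq)

lemma lin_comb_integer_mod_group_triple:
  fixes q p :: nat
  defines "G \<equiv> integer_mod_group q \<times>\<times> (integer_mod_group p \<times>\<times> integer_mod_group p)"
  assumes "finite S" and "S \<subseteq> carrier G"
  shows "lin_comb G e S = ((\<Sum>s\<in>S. e s * fst s) mod int q, (\<Sum>s\<in>S. e s * fst (snd s)) mod int p,
      (\<Sum>s\<in>S. e s * snd (snd s)) mod int p)"
proof -
  interpret G: comm_group G
    unfolding G_def by (simp add: DirProd_comm_group)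
  have pow: "s [^]\<^bsub>G\<^esub> e s =
      ((e s * fst s) mod int q, (e s * fst (snd s)) mod int p, (e s * snd (snd s)) mod int p)"
    if "s \<in> S" for s
  proof -
    obtain x y z where "s = (x, y, z)"
      by (cases s) auto
    then show ?thesis
      using that assms(3) unfolding G_def
      by (auto simp: int_pow_DirProd DirProd_group int_pow_integer_mod_group)
  qed
  have "lin_comb G e S = finprod G (\<lambda>s. ((e s * fst s) mod int q,
      (e s * fst (snd s)) mod int p, (e s * snd (snd s)) mod int p)) S"
    unfolding lin_comb_def using pow
    by (intro G.finprod_cong') (auto simp: G_def mod_in_carrier_integer_mod_group)
  also have "\<dots> = ((\<Sum>s\<in>S. e s * fst s) mod int q, (\<Sum>s\<in>S. e s * fst (snd s)) mod int p,
      (\<Sum>s\<in>S. e s * snd (snd s)) mod int p)"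
    unfolding G_def using assms(2)
    by (simp add: finprod_DirProd DirProd_comm_group Pi_iff mod_in_carrier_integer_mod_group
        finprod_mod_integer_mod_group)
  finally show ?thesis .
qed

lemma diamond_geI:
  assumes "comm_group G" and "finite S" and "S \<subseteq> carrier G"
    and injective: "\<And>e e'. e \<in> S \<rightarrow>\<^sub>E M \<union> {0} \<Longrightarrow> e' \<in> S \<rightarrow>\<^sub>E M \<union> {0} \<Longrightarrow>
      card {s\<in>S. e s \<noteq> 0} \<le> t \<Longrightarrow> card {s\<in>S. e' s \<noteq> 0} \<le> t \<Longrightarrow>
      lin_comb G e S = lin_comb G e' S \<Longrightarrow> e = e'"
  shows "diamond_ge G M t S"
  unfolding diamond_ge_def
proof (intro conjI ballI impI assms(2,3))
  interpret comm_group G by fact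
  fix e assume e: "e \<in> adm_coeffs M t S"
  define zero where "zero = (\<lambda>s\<in>S. 0 :: int)"
  have "zero \<in> S \<rightarrow>\<^sub>E M \<union> {0}" "card {s\<in>S. zero s \<noteq> 0} = 0"
    unfolding zero_def by auto
  moreover have "lin_comb G zero S = \<one>\<^bsub>G\<^esub>"
    unfolding lin_comb_def zero_def using assms(3) by (intro finprod_one_eqI) auto
  ultimately show "lin_comb G e S \<noteq> \<one>\<^bsub>G\<^esub>"
    using e injective[of e zero] by (fastforce simp: adm_coeffs_def)
next
  fix e e' assume "e \<in> adm_coeffs M t S" "e' \<in> adm_coeffs M t S" "e \<noteq> e'"
  then show "lin_comb G e S \<noteq> lin_comb G e' S"
    using injective[of e e'] by (auto simp: adm_coeffs_def)
qed

definition digit_vectors :: "nat \<Rightarrow> int \<Rightarrow> int \<Rightarrow> (nat \<Rightarrow> int) set" where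
  "digit_vectors D K m = {U. (\<forall>i<D. 0 \<le> U i \<and> U i \<le> K) \<and> norm2 D U = m}"

definition sphere_code :: "int \<Rightarrow> nat \<Rightarrow> int \<Rightarrow> int \<Rightarrow> int set" where
  "sphere_code B D K m = digit_value B D ` digit_vectors D K m"

lemma sphere_code_eq_setcompr:
  "sphere_code B D K m =
    {(\<Sum>i<D. x i * B ^ i) | x. (\<forall>i<D. 0 \<le> x i \<and> x i \<le> K) \<and> (\<Sum>i<D. (x i)\<^sup>2) = m}"
  by (auto simp: sphere_code_def digit_vectors_def digit_value_def norm2_def)

text \<open>By \<open>base_large\<close>, a balanced combination of four digit vectors with coefficients of total
  absolute value at most \<open>4 k\<^sup>2\<close> has digits of absolute value below \<open>B\<close>; with \<open>B ^ D \<le> p\<close>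
  a congruence between the corresponding numbers then holds digitwise.\<close>
locale sphere_code_params =
  fixes k K B p :: int and D :: nat
  assumes k_pos: "1 \<le> k" and k_le_3: "k \<le> 3" and K_pos: "1 \<le> K"
    and base_large: "2 * k\<^sup>2 * K < B"
    and base_pow_le: "B ^ D \<le> p"
    and prime_p: "Factorial_Ring.prime p"
    and p_large: "2 * k < p"
    and three_non_residue: "\<not> QuadRes p 3"
begin

lemma k_le_k2: "k \<le> k\<^sup>2"
  using k_pos by (simp add: power2_eq_square)

lemma K_lt_B: "K < B"
proof -
  have "K \<le> k\<^sup>2 * K"
    using k_pos K_pos one_le_power[OF k_pos, of 2] by simp
  moreover have "2 * k\<^sup>2 * K = 2 * (k\<^sup>2 * K)"
    by (simp add: mult.assoc)
  ultimately show ?thesis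
    using base_large K_pos by linarith
qed

lemma code_range:
  assumes "u \<in> sphere_code B D K m"
  shows "0 \<le> u \<and> u < p"
proof -
  obtain U where U: "\<forall>i<D. 0 \<le> U i \<and> U i \<le> K" and u: "u = digit_value B D U"
    using assms by (auto simp: sphere_code_def digit_vectors_def)
  have "0 \<le> u \<and> u < B ^ D"
    unfolding u using K_lt_B K_pos U by (intro digit_value_range) auto
  then show ?thesis
    using base_pow_le by linarith
qed

lemma code_eq_if_dvd:
  "u \<in> sphere_code B D K m \<Longrightarrow> v \<in> sphere_code B D K m' \<Longrightarrow> p dvd u - v \<Longrightarrow> u = v"
  using code_range cong_less_imp_eq_int[of u p v] by (simp add: cong_iff_dvd_diff)

lemma not_dvd_small: "t \<noteq> 0 \<Longrightarrow> \<bar>t\<bar> \<le> 2 * k \<Longrightarrow> \<not> p dvd t"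
  using dvd_abs_less_imp_eq_0 p_large by force

lemma digitwise_if_dvd:
  assumes "a + b + c + d = 0" and "\<bar>a\<bar> + \<bar>b\<bar> + \<bar>c\<bar> + \<bar>d\<bar> \<le> 4 * k\<^sup>2"
    and "U \<in> digit_vectors D K m" "V \<in> digit_vectors D K m" "W \<in> digit_vectors D K m" "Z \<in> digit_vectors D K m"
    and "p dvd a * digit_value B D U + b * digit_value B D V + c * digit_value B D W + d * digit_value B D Z"
  shows "\<forall>i<D. a * U i + b * V i + c * W i + d * Z i = 0"
proof (rule digitwise_eq_0_if_dvd_combination[OF _ base_pow_le assms(1) _ _ _ _ _ assms(7)])
  show "2 \<le> B"
    using K_lt_B K_pos by simp
  have "(\<bar>a\<bar> + \<bar>b\<bar> + \<bar>c\<bar> + \<bar>d\<bar>) * K \<le> 4 * k\<^sup>2 * K"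
    using assms(2) K_pos by (simp add: mult_right_mono)
  moreover have "4 * k\<^sup>2 * K \<le> 2 * (B - 1)"
    using base_large by simp
  ultimately show "(\<bar>a\<bar> + \<bar>b\<bar> + \<bar>c\<bar> + \<bar>d\<bar>) * K \<le> 2 * (B - 1)"
    by (rule order_trans)
qed (use assms(3-6) in \<open>simp_all add: digit_vectors_def\<close>)

lemma small_factor_of_quadratic_relation:
  fixes a b c d x y :: int
  assumes "a \<noteq> 0" "b \<noteq> 0" "c \<noteq> 0" "d \<noteq> 0" "\<bar>a\<bar> \<le> k" "\<bar>b\<bar> \<le> k" "\<bar>c\<bar> \<le> k" "\<bar>d\<bar> \<le> k"
    and "a + b = c + d" "a + b \<noteq> 0" "0 < a * b * (c * d)"
    and "\<not> p dvd y" and "p dvd a * b * x\<^sup>2 - c * d * y\<^sup>2"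
  shows "\<exists>Q. Q \<noteq> 0 \<and> \<bar>Q\<bar> \<le> k\<^sup>2 \<and> p dvd a * b * x - Q * y"
proof -
  have "p dvd a * b * (a * b * x\<^sup>2 - c * d * y\<^sup>2)"
    using assms(13) by simp
  then have dvd: "p dvd (a * b * x)\<^sup>2 - a * b * (c * d) * y\<^sup>2"
    by (simp add: power2_eq_square algebra_simps)
  have "a \<in> {-3..3} - {0}" "b \<in> {-3..3} - {0}" "c \<in> {-3..3} - {0}" "d \<in> {-3..3} - {0}"
    using assms(1-8) k_le_3 by auto
  then consider "a * b * (c * d) = 12" | t where "0 < t" "a * b * (c * d) = t\<^sup>2"
    using small_balanced_product_cases assms(9-11) by blast
  then show ?thesis
  proof cases
    case 1
    \<comment> \<open>\<open>12 = 3 \<cdot> 2\<^sup>2\<close> would make 3 a square modulo \<open>p\<close>.\<close>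
    have "\<not> p dvd 2 * y"
      using prime_p assms(12) not_dvd_small[of 2] k_pos by (auto simp: prime_dvd_mult_iff)
    moreover have "p dvd (a * b * x)\<^sup>2 - 3 * (2 * y)\<^sup>2"
      using dvd 1 by (simp add: power_mult_distrib)
    ultimately have "QuadRes p 3"
      using QuadRes_if_dvd_square_diff prime_p by blast
    then show ?thesis
      using three_non_residue by simp
  next
    case (2 t)
    have "t\<^sup>2 = \<bar>a * b\<bar> * \<bar>c * d\<bar>"
      using 2 by (simp flip: abs_mult)
    moreover have "\<bar>a * b\<bar> * \<bar>c * d\<bar> \<le> (k * k) * (k * k)"
      using assms(5-8) by (intro mult_mono) (auto simp: abs_mult intro: mult_mono)
    ultimately have "t\<^sup>2 \<le> (k\<^sup>2)\<^sup>2"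
      by (simp add: power2_eq_square)
    then have "t \<le> k\<^sup>2"
      by (rule power2_le_imp_le) simp
    have "(a * b * x)\<^sup>2 - a * b * (c * d) * y\<^sup>2 = (a * b * x - t * y) * (a * b * x - (- t) * y)"
      using 2 by (simp add: power2_eq_square algebra_simps)
    then have "p dvd a * b * x - t * y \<or> p dvd a * b * x - (- t) * y"
      using dvd prime_p by (simp add: prime_dvd_mult_iff)
    then show ?thesis
      using \<open>0 < t\<close> \<open>t \<le> k\<^sup>2\<close> by (metis abs_minus_cancel abs_of_pos neg_0_equal_iff_equal less_irrefl)
  qed
qed

lemma digit_sums_eq_if_balanced:
  assumes "U \<in> digit_vectors D K m" "V \<in> digit_vectors D K m" "W \<in> digit_vectors D K m" "Z \<in> digit_vectors D K m"
    and "a + b = 0" "c + d = 0" "c \<noteq> 0" "\<bar>c\<bar> \<le> k"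
    and "digit_value B D W \<noteq> digit_value B D Z"
    and lin: "\<forall>i<D. a * U i + b * V i = c * W i + d * Z i"
    and quad: "p dvd (a * (digit_value B D U)\<^sup>2 + b * (digit_value B D V)\<^sup>2) -
                (c * (digit_value B D W)\<^sup>2 + d * (digit_value B D Z)\<^sup>2)"
  shows "\<forall>i<D. U i + V i = W i + Z i"
proof -
  define u v w z where "u = digit_value B D U" and "v = digit_value B D V"
    and "w = digit_value B D W" and "z = digit_value B D Z"
  have b: "b = - a" and d: "d = - c"
    using assms(5,6) by auto
  have lin_value: "a * u + b * v = c * w + d * z"
    unfolding u_def v_def w_def z_def using lin by (rule digit_value_eq_if_combination)
  \<comment> \<open>Dividing the quadratic relation by the linear one gives \<open>w + z \<equiv> u + v\<close>.\<close>
  have identity: "c * (w - z) * ((w + z) - (u + v)) =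
      - ((a * u\<^sup>2 + b * v\<^sup>2) - (c * w\<^sup>2 + d * z\<^sup>2)) + (u + v) * ((a * u + b * v) - (c * w + d * z))"
    unfolding b d by (simp add: algebra_simps power2_eq_square)
  have "p dvd - ((a * u\<^sup>2 + b * v\<^sup>2) - (c * w\<^sup>2 + d * z\<^sup>2)) + (u + v) * ((a * u + b * v) - (c * w + d * z))"
    using quad lin_value unfolding u_def v_def w_def z_def by (simp add: dvd_diff_commute)
  then have "p dvd c * (w - z) * ((w + z) - (u + v))"
    unfolding identity .
  moreover have "\<not> p dvd c" "\<not> p dvd w - z"
    using not_dvd_small[of c] assms(3,4,7-9) k_pos code_eq_if_dvd[of w m z m]
    by (auto simp: u_def v_def w_def z_def sphere_code_def)
  ultimately have "p dvd (w + z) - (u + v)"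
    using prime_p by (simp add: prime_dvd_mult_iff)
  moreover have "(-1) * u + (-1) * v + 1 * w + 1 * z = (w + z) - (u + v)"
    by simp
  ultimately have "p dvd (-1) * u + (-1) * v + 1 * w + 1 * z"
    by (simp only:)
  then have "\<forall>i<D. (-1) * U i + (-1) * V i + 1 * W i + 1 * Z i = 0"
    using assms(1-4) k_pos one_le_power[OF k_pos, of 2] unfolding u_def v_def w_def z_def
    by (intro digitwise_if_dvd) auto
  then show ?thesis
    by (auto simp: algebra_simps)
qed

lemma digit_differences_proportional_if_unbalanced:
  assumes "U \<in> digit_vectors D K m" "V \<in> digit_vectors D K m" "W \<in> digit_vectors D K m" "Z \<in> digit_vectors D K m"
    and "a \<noteq> 0" "b \<noteq> 0" "c \<noteq> 0" "d \<noteq> 0" "\<bar>a\<bar> \<le> k" "\<bar>b\<bar> \<le> k" "\<bar>c\<bar> \<le> k" "\<bar>d\<bar> \<le> k"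
    and "a + b = c + d" "a + b \<noteq> 0"
    and "digit_value B D U \<noteq> digit_value B D V" "digit_value B D W \<noteq> digit_value B D Z"
    and lin: "\<forall>i<D. a * U i + b * V i = c * W i + d * Z i"
    and quad: "p dvd (a * (digit_value B D U)\<^sup>2 + b * (digit_value B D V)\<^sup>2) -
                (c * (digit_value B D W)\<^sup>2 + d * (digit_value B D Z)\<^sup>2)"
  shows "\<exists>Q. Q \<noteq> 0 \<and> (\<forall>i<D. a * b * U i + (- (a * b)) * V i = Q * W i + (- Q) * Z i)"
proof -
  define u v w z where "u = digit_value B D U" and "v = digit_value B D V"
    and "w = digit_value B D W" and "z = digit_value B D Z"
  have "\<exists>i<D. U i \<noteq> V i" "\<exists>i<D. W i \<noteq> Z i"
    using assms(15,16) by (auto dest: digits_neq_if_digit_value_neq)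
  then have "0 < a * b * (c * d)"
    using assms(1-8,13) lin
    by (intro combination_coefficients_sign[of D U m V W Z]) (auto simp: digit_vectors_def)
  moreover have "p dvd a * b * (u - v)\<^sup>2 - c * d * (w - z)\<^sup>2"
    using four_term_quadratic_identity[OF assms(13) digit_value_eq_if_combination[OF lin]] quad
    unfolding u_def v_def w_def z_def by simp
  moreover have "\<not> p dvd w - z"
  proof
    assume "p dvd w - z"
    moreover have "w \<in> sphere_code B D K m" "z \<in> sphere_code B D K m"
      using assms(3,4) unfolding w_def z_def sphere_code_def by auto
    ultimately show False
      using assms(16) code_eq_if_dvd unfolding w_def z_def by blast
  qed
  ultimately obtain Q where Q: "Q \<noteq> 0" "\<bar>Q\<bar> \<le> k\<^sup>2" "p dvd a * b * (u - v) - Q * (w - z)"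
    using small_factor_of_quadratic_relation[OF assms(5-14)] by blast
  have "\<bar>a * b\<bar> \<le> k\<^sup>2"
    unfolding power2_eq_square abs_mult using assms(9,10) by (intro mult_mono) auto
  moreover have "p dvd a * b * u + (- (a * b)) * v + (- Q) * w + Q * z"
    using Q(3) by (simp add: algebra_simps)
  ultimately have "\<forall>i<D. a * b * U i + (- (a * b)) * V i + (- Q) * W i + Q * Z i = 0"
    using assms(1-4) Q(2) unfolding u_def v_def w_def z_def by (intro digitwise_if_dvd) auto
  then show ?thesis
    using Q(1) by (auto simp: algebra_simps)
qed

lemma no_four_point_relation:
  assumes "u \<in> sphere_code B D K m" "v \<in> sphere_code B D K m" "w \<in> sphere_code B D K m" "z \<in> sphere_code B D K m"
    and "u \<noteq> v" "w \<noteq> z" "w \<noteq> u" "w \<noteq> v"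
    and "a \<noteq> 0" "b \<noteq> 0" "c \<noteq> 0" "d \<noteq> 0" "\<bar>a\<bar> \<le> k" "\<bar>b\<bar> \<le> k" "\<bar>c\<bar> \<le> k" "\<bar>d\<bar> \<le> k"
    and "a + b = c + d"
    and "[a * u + b * v = c * w + d * z] (mod p)"
    and "[a * u\<^sup>2 + b * v\<^sup>2 = c * w\<^sup>2 + d * z\<^sup>2] (mod p)"
  shows False
proof -
  obtain U V W Z where vectors: "U \<in> digit_vectors D K m" "V \<in> digit_vectors D K m"
      "W \<in> digit_vectors D K m" "Z \<in> digit_vectors D K m"
    and val_eqs: "u = digit_value B D U" "v = digit_value B D V" "w = digit_value B D W" "z = digit_value B D Z"
    using assms(1-4) unfolding sphere_code_def by blast
  have "\<bar>a\<bar> + \<bar>b\<bar> + \<bar>- c\<bar> + \<bar>- d\<bar> \<le> 4 * k\<^sup>2"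
    using assms(13-16) k_le_k2 by simp
  moreover have "p dvd a * u + b * v + (- c) * w + (- d) * z"
    using assms(18) by (simp add: cong_iff_dvd_diff algebra_simps)
  ultimately have "\<forall>i<D. a * U i + b * V i + (- c) * W i + (- d) * Z i = 0"
    using vectors assms(17) unfolding val_eqs by (intro digitwise_if_dvd) auto
  then have lin: "\<forall>i<D. a * U i + b * V i = c * W i + d * Z i"
    by (simp add: algebra_simps)
  have quad: "p dvd (a * u\<^sup>2 + b * v\<^sup>2) - (c * w\<^sup>2 + d * z\<^sup>2)"
    using assms(19) by (simp add: cong_iff_dvd_diff)
  have "on_line D U V W"
  proof (cases "a + b = 0")
    case True
    then have "\<forall>i<D. 1 * U i + 1 * V i = 1 * W i + 1 * Z i"
      using digit_sums_eq_if_balanced[OF vectors] assms(6,11,15,17) lin quad unfolding val_eqs by simp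
    from on_line_if_two_relations[OF lin this assms(17)] show ?thesis
      using True assms(11,17) by simp
  next
    case False
    moreover have "digit_value B D U \<noteq> digit_value B D V" "digit_value B D W \<noteq> digit_value B D Z"
      using assms(5,6) unfolding val_eqs .
    ultimately obtain Q where "Q \<noteq> 0" and rel: "\<forall>i<D. a * b * U i + (- (a * b)) * V i = Q * W i + (- Q) * Z i"
      using digit_differences_proportional_if_unbalanced[OF vectors assms(9-17)] lin quad
      unfolding val_eqs by blast
    moreover have "(- Q) * c - d * Q = - (Q * (c + d))"
      by (simp add: algebra_simps)
    ultimately show ?thesis
      using on_line_if_two_relations[OF lin rel assms(17)] False assms(17) by simp
  qed
  then have "w = u \<or> w = v"
    using vectors unfolding val_eqs by (intro digit_value_on_line_sphere) (auto simp: digit_vectors_def)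
  then show False
    using assms(7,8) by blast
qed

lemma disjoint_pair_combinations_differ:
  fixes \<xi> e e' :: "'a \<Rightarrow> int"
  assumes "finite I" and "inj_on \<xi> I" and "\<xi> ` I \<subseteq> sphere_code B D K m"
    and A: "{i\<in>I. e i \<noteq> 0} = {s1, s2}" "s1 \<noteq> s2"
    and A': "{i\<in>I. e' i \<noteq> 0} = {s3, s4}" "s3 \<noteq> s4" "s3 \<notin> {s1, s2}"
    and "\<forall>i\<in>I. \<bar>e i\<bar> \<le> k" "\<forall>i\<in>I. \<bar>e' i\<bar> \<le> k"
    and "sum e I = sum e' I"
    and "[(\<Sum>i\<in>I. e i * \<xi> i) = (\<Sum>i\<in>I. e' i * \<xi> i)] (mod p)"
    and "[(\<Sum>i\<in>I. e i * (\<xi> i)\<^sup>2) = (\<Sum>i\<in>I. e' i * (\<xi> i)\<^sup>2)] (mod p)"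
  shows False
proof -
  have on_support: "(\<Sum>i\<in>I. g i * h i) = (\<Sum>i\<in>{i\<in>I. g i \<noteq> 0}. g i * h i)" for g h :: "'a \<Rightarrow> int"
    using assms(1) by (intro sum.mono_neutral_right) auto
  have sums: "(\<Sum>i\<in>I. e i * h i) = e s1 * h s1 + e s2 * h s2"
    "(\<Sum>i\<in>I. e' i * h i) = e' s3 * h s3 + e' s4 * h s4" for h
    using on_support[of e h] on_support[of e' h] A A' by simp_all
  have in_I: "s1 \<in> I" "s2 \<in> I" "s3 \<in> I" "s4 \<in> I"
    and nonzero: "e s1 \<noteq> 0" "e s2 \<noteq> 0" "e' s3 \<noteq> 0" "e' s4 \<noteq> 0"
    using A A' by blast+
  have mem: "\<xi> s1 \<in> sphere_code B D K m" "\<xi> s2 \<in> sphere_code B D K m"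
    "\<xi> s3 \<in> sphere_code B D K m" "\<xi> s4 \<in> sphere_code B D K m"
    using assms(3) in_I by auto
  have distinct: "\<xi> s1 \<noteq> \<xi> s2" "\<xi> s3 \<noteq> \<xi> s4" "\<xi> s3 \<noteq> \<xi> s1" "\<xi> s3 \<noteq> \<xi> s2"
    using assms(2) in_I A(2) A'(2,3) by (auto dest: inj_onD)
  have bounds: "\<bar>e s1\<bar> \<le> k" "\<bar>e s2\<bar> \<le> k" "\<bar>e' s3\<bar> \<le> k" "\<bar>e' s4\<bar> \<le> k"
    using assms(9,10) in_I by auto
  have balanced: "e s1 + e s2 = e' s3 + e' s4"
    using assms(11) sums[of "\<lambda>_. 1"] by simp
  have linear: "[e s1 * \<xi> s1 + e s2 * \<xi> s2 = e' s3 * \<xi> s3 + e' s4 * \<xi> s4] (mod p)"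
    using assms(12) sums[of \<xi>] by simp
  have quadratic: "[e s1 * (\<xi> s1)\<^sup>2 + e s2 * (\<xi> s2)\<^sup>2 = e' s3 * (\<xi> s3)\<^sup>2 + e' s4 * (\<xi> s4)\<^sup>2] (mod p)"
    using assms(13) sums[of "\<lambda>i. (\<xi> i)\<^sup>2"] by simp
  show False
    by (rule no_four_point_relation[OF mem distinct nonzero bounds balanced linear quadratic])
qed

lemma difference_support_empty_if_card_le_3:
  fixes \<xi> e e' :: "'a \<Rightarrow> int"
  assumes "finite I" and "inj_on \<xi> I" and "\<xi> ` I \<subseteq> sphere_code B D K m"
    and "\<forall>i\<in>I. \<bar>e i\<bar> \<le> k" "\<forall>i\<in>I. \<bar>e' i\<bar> \<le> k"
    and "sum e I = sum e' I"
    and "[(\<Sum>i\<in>I. e i * \<xi> i) = (\<Sum>i\<in>I. e' i * \<xi> i)] (mod p)"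
    and "[(\<Sum>i\<in>I. e i * (\<xi> i)\<^sup>2) = (\<Sum>i\<in>I. e' i * (\<xi> i)\<^sup>2)] (mod p)"
    and "card {i\<in>I. e i \<noteq> e' i} \<le> 3"
  shows "{i\<in>I. e i \<noteq> e' i} = {}"
proof (rule quadratic_relation_support_empty[OF prime_p _ assms(9)])
  define T where "T = {i\<in>I. e i \<noteq> e' i}"
  have on_T: "(\<Sum>i\<in>I. (e i - e' i) * h i) = (\<Sum>i\<in>T. (e i - e' i) * h i)" for h
    unfolding T_def using assms(1) by (intro sum.mono_neutral_right) auto
  have diff: "(\<Sum>i\<in>I. (e i - e' i) * h i) = (\<Sum>i\<in>I. e i * h i) - (\<Sum>i\<in>I. e' i * h i)" for h
    by (simp add: left_diff_distrib sum_subtractf)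
  have "T \<subseteq> I"
    unfolding T_def by blast
  then show "finite T"
    using assms(1) by (rule finite_subset)
  show "inj_on \<xi> T"
    using inj_on_subset[OF assms(2) \<open>T \<subseteq> I\<close>] .
  show "\<forall>t\<in>T. 0 \<le> \<xi> t \<and> \<xi> t < p"
  proof
    fix t assume "t \<in> T"
    then have "\<xi> t \<in> sphere_code B D K m"
      using \<open>T \<subseteq> I\<close> assms(3) by auto
    then show "0 \<le> \<xi> t \<and> \<xi> t < p"
      by (rule code_range)
  qed
  show "\<forall>t\<in>T. \<not> p dvd e t - e' t"
  proof
    fix t assume "t \<in> T"
    then have "e t - e' t \<noteq> 0" "\<bar>e t\<bar> \<le> k" "\<bar>e' t\<bar> \<le> k"
      using assms(4,5) unfolding T_def by auto
    then have "e t - e' t \<noteq> 0" "\<bar>e t - e' t\<bar> \<le> 2 * k"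
      by linarith+
    then show "\<not> p dvd e t - e' t"
      by (rule not_dvd_small)
  qed
  show "sum (\<lambda>t. e t - e' t) T = 0"
    using on_T[of "\<lambda>_. 1"] diff[of "\<lambda>_. 1"] assms(6) by simp
  show "p dvd (\<Sum>t\<in>T. (e t - e' t) * \<xi> t)" "p dvd (\<Sum>t\<in>T. (e t - e' t) * (\<xi> t)\<^sup>2)"
    using on_T diff assms(7,8) by (simp_all add: cong_iff_dvd_diff)
qed

lemma weight_2_combinations_eq:
  fixes \<xi> e e' :: "'a \<Rightarrow> int" and l :: int
  assumes "finite I" and "inj_on \<xi> I" and "\<xi> ` I \<subseteq> sphere_code B D K m" and "0 \<le> l" "l \<le> k"
    and "\<forall>i\<in>I. - l \<le> e i \<and> e i \<le> k" "\<forall>i\<in>I. - l \<le> e' i \<and> e' i \<le> k"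
    and "card {i\<in>I. e i \<noteq> 0} \<le> 2" "card {i\<in>I. e' i \<noteq> 0} \<le> 2"
    and "[sum e I = sum e' I] (mod 3 * k + 2 * l + 1)"
    and "[(\<Sum>i\<in>I. e i * \<xi> i) = (\<Sum>i\<in>I. e' i * \<xi> i)] (mod p)"
    and "[(\<Sum>i\<in>I. e i * (\<xi> i)\<^sup>2) = (\<Sum>i\<in>I. e' i * (\<xi> i)\<^sup>2)] (mod p)"
  shows "\<forall>i\<in>I. e i = e' i"
proof -
  \<comment> \<open>Both sums lie in \<open>[-2 l, 2 k]\<close>, so the first coordinate pins them down exactly.\<close>
  have "- 2 * l \<le> sum e I \<and> sum e I \<le> 2 * k" "- 2 * l \<le> sum e' I \<and> sum e' I \<le> 2 * k"
    using sum_bounds_if_card_support_le[OF assms(1), where lo = "- l" and hi = k and n = 2] assms(4-9)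
    by auto
  then have "\<bar>sum e I - sum e' I\<bar> < 3 * k + 2 * l + 1"
    using k_pos unfolding abs_less_iff by linarith
  then have sum_eq: "sum e I = sum e' I"
    using assms(10) dvd_abs_less_imp_eq_0[of "3 * k + 2 * l + 1" "sum e I - sum e' I"]
    by (simp add: cong_iff_dvd_diff)
  have bounds: "\<forall>i\<in>I. \<bar>e i\<bar> \<le> k" "\<forall>i\<in>I. \<bar>e' i\<bar> \<le> k"
    using assms(4-7) by auto
  have "{i\<in>I. e i \<noteq> e' i} = {}"
  proof (cases "card {i\<in>I. e i \<noteq> e' i} \<le> 3")
    case True
    then show ?thesis
      by (rule difference_support_empty_if_card_le_3[OF assms(1-3) bounds sum_eq assms(11,12)])
  next
    case False
    then have "3 < card {i\<in>I. e i \<noteq> e' i}"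
      by simp
    then obtain s1 s2 s3 s4 where "{i\<in>I. e i \<noteq> 0} = {s1, s2}" "s1 \<noteq> s2"
        "{i\<in>I. e' i \<noteq> 0} = {s3, s4}" "s3 \<noteq> s4" "s3 \<notin> {s1, s2}"
      by (rule disjoint_pair_supports[OF assms(1,8,9)])
    then have False
      by (rule disjoint_pair_combinations_differ[OF assms(1-3) _ _ _ _ _ bounds sum_eq assms(11,12)])
    then show ?thesis ..
  qed
  then show ?thesis
    by auto
qed

lemma finite_sphere_code: "finite (sphere_code B D K m)"
proof (rule finite_subset)
  show "sphere_code B D K m \<subseteq> {0..<p}"
  proof
    fix u assume "u \<in> sphere_code B D K m"
    then show "u \<in> {0..<p}"
      using code_range by simp
  qed
qed simp

lemma code_points_carrier:
  assumes "q \<noteq> 1"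
  shows "(\<lambda>x. (1, x, x\<^sup>2 mod p)) ` sphere_code B D K m \<subseteq>
    carrier (integer_mod_group q \<times>\<times> (integer_mod_group (nat p) \<times>\<times> integer_mod_group (nat p)))"
proof (rule image_subsetI)
  fix x assume "x \<in> sphere_code B D K m"
  then have "x \<in> carrier (integer_mod_group (nat p))"
    using code_range by (simp add: carrier_integer_mod_group)
  moreover have "x\<^sup>2 mod p \<in> carrier (integer_mod_group (nat p))"
    using mod_in_carrier_integer_mod_group[of "x\<^sup>2" "nat p"] p_large k_pos by simp
  ultimately show "(1, x, x\<^sup>2 mod p) \<in> carrier (integer_mod_group q \<times>\<times> (integer_mod_group (nat p) \<times>\<times> integer_mod_group (nat p)))"
    using assms by simp
qed

lemma lin_comb_code_points:
  fixes m :: int and e :: "int \<times> int \<times> int \<Rightarrow> int"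
  assumes "q \<noteq> 1"
  defines "S \<equiv> (\<lambda>x. (1, x, x\<^sup>2 mod p)) ` sphere_code B D K m"
  shows "lin_comb (integer_mod_group q \<times>\<times> (integer_mod_group (nat p) \<times>\<times> integer_mod_group (nat p))) e S =
    (sum e S mod int q, (\<Sum>s\<in>S. e s * fst (snd s)) mod p, (\<Sum>s\<in>S. e s * (fst (snd s))\<^sup>2) mod p)"
proof -
  have first: "(\<Sum>s\<in>S. e s * fst s) = sum e S"
    unfolding S_def by (rule sum.cong[OF refl]) auto
  have "(\<Sum>s\<in>S. e s * snd (snd s)) = (\<Sum>s\<in>S. e s * ((fst (snd s))\<^sup>2 mod p))"
    unfolding S_def by (rule sum.cong[OF refl]) auto
  then have third: "(\<Sum>s\<in>S. e s * snd (snd s)) mod p = (\<Sum>s\<in>S. e s * (fst (snd s))\<^sup>2) mod p"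
    using sum_mult_mod_mod[of e "\<lambda>s. (fst (snd s))\<^sup>2" p S] by (simp only:)
  have p: "int (nat p) = p"
    using p_large k_pos by simp
  have "finite S" "S \<subseteq> carrier (integer_mod_group q \<times>\<times> (integer_mod_group (nat p) \<times>\<times> integer_mod_group (nat p)))"
    unfolding S_def using finite_sphere_code code_points_carrier[OF assms(1)] by simp_all
  from lin_comb_integer_mod_group_triple[OF this, where e = e] show ?thesis
    unfolding p first third .
qed

lemma diamond_ge_sphere_code:
  assumes "0 \<le> l" and "l \<le> k"
  shows "diamond_ge (integer_mod_group (nat (3 * k + 2 * l + 1)) \<times>\<times>
      (integer_mod_group (nat p) \<times>\<times> integer_mod_group (nat p)))
    ({- l .. k} - {0}) 2 ((\<lambda>x. (1, x mod p, x\<^sup>2 mod p)) ` sphere_code B D K m)"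
proof -
  define q where "q = nat (3 * k + 2 * l + 1)"
  define G where "G = integer_mod_group q \<times>\<times> (integer_mod_group (nat p) \<times>\<times> integer_mod_group (nat p))"
  define S where "S = (\<lambda>x. (1 :: int, x, x\<^sup>2 mod p)) ` sphere_code B D K m"
  let ?\<xi> = "\<lambda>s :: int \<times> int \<times> int. fst (snd s)"
  have q: "int q = 3 * k + 2 * l + 1" "q \<noteq> 1"
    unfolding q_def using assms k_pos by auto
  have fin: "finite S"
    unfolding S_def using finite_sphere_code by simp
  have "diamond_ge G ({- l .. k} - {0}) 2 S"
  proof (rule diamond_geI[OF _ fin])
    show "comm_group G" "S \<subseteq> carrier G"
      using code_points_carrier[OF q(2)] unfolding G_def S_def by (simp_all add: DirProd_comm_group)
  next
    fix e e' assume e: "e \<in> S \<rightarrow>\<^sub>E ({- l .. k} - {0}) \<union> {0}" and e': "e' \<in> S \<rightarrow>\<^sub>E ({- l .. k} - {0}) \<union> {0}"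
      and card: "card {s\<in>S. e s \<noteq> 0} \<le> 2" "card {s\<in>S. e' s \<noteq> 0} \<le> 2"
      and eq: "lin_comb G e S = lin_comb G e' S"
    from eq have congs: "[sum e S = sum e' S] (mod 3 * k + 2 * l + 1)"
        "[(\<Sum>s\<in>S. e s * ?\<xi> s) = (\<Sum>s\<in>S. e' s * ?\<xi> s)] (mod p)"
        "[(\<Sum>s\<in>S. e s * (?\<xi> s)\<^sup>2) = (\<Sum>s\<in>S. e' s * (?\<xi> s)\<^sup>2)] (mod p)"
      unfolding G_def S_def lin_comb_code_points[OF q(2)] by (simp_all add: cong_def q(1))
    have \<xi>: "inj_on ?\<xi> S" "?\<xi> ` S \<subseteq> sphere_code B D K m"
      unfolding S_def inj_on_def by auto
    have range: "\<forall>s\<in>S. - l \<le> g s \<and> g s \<le> k" if "g \<in> S \<rightarrow>\<^sub>E ({- l .. k} - {0}) \<union> {0}" for g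
    proof
      fix s assume "s \<in> S"
      then have "g s \<in> ({- l .. k} - {0}) \<union> {0}"
        by (rule PiE_mem[OF that])
      then show "- l \<le> g s \<and> g s \<le> k"
        using assms by auto
    qed
    have "\<forall>s\<in>S. e s = e' s"
      by (rule weight_2_combinations_eq[OF fin \<xi> assms range[OF e] range[OF e'] card congs])
    then show "e = e'"
      using PiE_ext[OF e e'] by blast
  qed
  moreover have "(\<lambda>x. (1, x mod p, x\<^sup>2 mod p)) ` sphere_code B D K m = S"
    unfolding S_def using code_range by (intro image_cong) simp_all
  ultimately show ?thesis
    unfolding G_def q_def by simp
qed

end

lemma sphere_code_params_instance:
  fixes kp km D K p :: nat
  assumes "km \<le> kp" and "kp \<le> 3" and "kp + km \<ge> 1" and "D \<ge> 2" and "K \<ge> 1"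
    and "Factorial_Ring.prime p" and "p mod 12 = 5 \<or> p mod 12 = 7"
    and "(max (2 * kp\<^sup>2) 3 * K + 1) ^ D \<le> p"
  shows "sphere_code_params (int kp) (int K) (int (max (2 * kp\<^sup>2) 3 * K + 1)) (int p) D"
proof
  let ?B = "max (2 * kp\<^sup>2) 3 * K + 1"
  show "1 \<le> int kp" "int kp \<le> 3" "1 \<le> int K"
    using assms(1-3,5) by auto
  have "2 * kp\<^sup>2 * K \<le> max (2 * kp\<^sup>2) 3 * K"
    by (rule mult_le_mono1) simp
  then have "2 * kp\<^sup>2 * K < ?B"
    by (simp add: le_imp_less_Suc)
  then have "int (2 * kp\<^sup>2 * K) < int ?B"
    by (simp only: of_nat_less_iff)
  then show "2 * (int kp)\<^sup>2 * int K < int ?B"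
    by (simp only: of_nat_mult of_nat_power of_nat_numeral)
  have "int (?B ^ D) \<le> int p"
    using assms(8) by (simp only: of_nat_le_iff)
  then show "int ?B ^ D \<le> int p"
    by (simp only: of_nat_power)
  show "Factorial_Ring.prime (int p)"
    using assms(6) by simp
  show "\<not> QuadRes (int p) 3"
    using three_not_QuadRes assms(6,7) by blast
  have "3 * 1 \<le> max (2 * kp\<^sup>2) 3 * K"
    using assms(5) by (intro mult_le_mono) auto
  then have "4 \<le> ?B"
    by simp
  then have "4 ^ 2 \<le> ?B ^ 2"
    by (rule power_mono) simp
  also have "?B ^ 2 \<le> ?B ^ D"
    using assms(4) \<open>4 \<le> ?B\<close> by (intro power_increasing) auto
  also note assms(8)
  finally have "2 * kp < p"
    using assms(2) by simp
  then show "2 * int kp < int p"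
    by simp
qed

theorem theorem12:
  fixes kp km D K p :: nat
  assumes "km \<le> kp" and "kp \<le> 3" and "kp + km \<ge> 1"
    and "D \<ge> 2" and "K \<ge> 1"
    and "Factorial_Ring.prime p" and "p mod 12 = 5 \<or> p mod 12 = 7"
    and "(max (2 * kp\<^sup>2) 3 * K + 1) ^ D \<le> p"
  shows "\<forall>m < D * K\<^sup>2.
    diamond_ge
      (integer_mod_group (3 * kp + 2 * km + 1) \<times>\<times>
         (integer_mod_group p \<times>\<times> integer_mod_group p))
      ({- int km .. int kp} - {0}) 2
      ((\<lambda>x::int. (1::int, x mod int p, x\<^sup>2 mod int p)) `
        {(\<Sum>i<D. x i * int (max (2 * kp\<^sup>2) 3 * K + 1) ^ i) | x :: nat \<Rightarrow> int.
           (\<forall>i<D. 0 \<le> x i \<and> x i \<le> int K) \<and> (\<Sum>i<D. (x i)\<^sup>2) = int m})"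
proof -
  interpret sphere_code_params "int kp" "int K" "int (max (2 * kp\<^sup>2) 3 * K + 1)" "int p" D
    by (rule sphere_code_params_instance[OF assms])
  have "nat (3 * int kp + 2 * int km + 1) = 3 * kp + 2 * km + 1" "nat (int p) = p"
    by simp_all
  then show ?thesis
    using diamond_ge_sphere_code[of "int km"] assms(1) by (simp add: sphere_code_eq_setcompr)
qed

end
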